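(* Let $n\ge2$, $t\in\mathbb{Z}_{\ge0}$ and $\bm{N}=(t,0,\ldots,0,-t)\in\mathbb{Z}^{n+1}$. Then $|\mathcal{S}^+_n(\bm{N})|=J_{n-1,t}$. In particular, for $t\ge\binom{n-1}{2}$, $|\mathcal{S}^+_n(\bm{N})|=(n-1)!$.
   Context: For $\bm{M}=(M_0,\ldots,M_n)\in\mathbb{Z}^{n+1}$ with zero sum, $K_n(\bm{M})$ is the number of integer vectors $(f_{ij})_{0\le i<j\le n}\in\mathbb{Z}_{\ge0}^{\binom{n+1}{2}}$ with $\sum_{j>i} f_{ij}-\sum_{k<i} f_{ki}=M_i$ for all $i$. Let $\bm\delta=(n-1,\ldots,1,0)$; for a weak composition $\bm{j}=(j_0,\ldots,j_{n-1})$ of $\binom n2$, $K_n(\bm{j}-\bm\delta):=K_n(j_0-(n-1),\ldots,j_{n-1}-0,0)$. $\mathcal{S}^+_n(\bm{N})$ is the set of weak compositions $\bm{j}$ of $\binom n2$ with $\binom{N_0+n-1}{j_0}\binom{N_1+n-2}{j_1}\cdots\binom{N_{n-1}}{j_{n-1}}K_n(\bm{j}-\bm\delta)>0$. $J_{m,k}$ is the number of permutations of $\{1,\ldots,m\}$ with at most $k$ inversions. *)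

theory Defs
  imports Complex_Main "HOL-Combinatorics.Permutations"
begin

definition kostant_flows :: "nat \<Rightarrow> (nat \<Rightarrow> int) \<Rightarrow> (nat \<Rightarrow> nat \<Rightarrow> nat) set" where
  "kostant_flows n M = {f. (\<forall>i j. \<not> (i < j \<and> j \<le> n) \<longrightarrow> f i j = 0) \<and>
      (\<forall>i \<le> n. (\<Sum>j\<in>{i<..n}. int (f i j)) - (\<Sum>k<i. int (f k i)) = M i)}"

definition K :: "nat \<Rightarrow> (nat \<Rightarrow> int) \<Rightarrow> nat" where
  "K n M = card (kostant_flows n M)"

definition j_minus_delta :: "nat \<Rightarrow> (nat \<Rightarrow> nat) \<Rightarrow> nat \<Rightarrow> int" where
  "j_minus_delta n j = (\<lambda>i. if i < n then int (j i) - int (n - 1 - i) else 0)"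

definition weak_compositions :: "nat \<Rightarrow> nat \<Rightarrow> (nat \<Rightarrow> nat) set" where
  "weak_compositions n m = {j. (\<forall>i\<ge>n. j i = 0) \<and> (\<Sum>i<n. j i) = m}"

text \<open>S^+_n(N): binomial coefficients with integer top use the generalized binomial.\<close>
definition Splus :: "nat \<Rightarrow> (nat \<Rightarrow> int) \<Rightarrow> (nat \<Rightarrow> nat) set" where
  "Splus n N = {j \<in> weak_compositions n (n choose 2).
      (\<Prod>i<n. (of_int (N i + int (n - 1 - i)) :: real) gchoose (j i))
        * real (K n (j_minus_delta n j)) > 0}"

definition inversions :: "nat \<Rightarrow> (nat \<Rightarrow> nat) \<Rightarrow> nat" where
  "inversions m p = card {(a, b). a \<in> {1..m} \<and> b \<in> {1..m} \<and> a < b \<and> p a > p b}"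

definition J :: "nat \<Rightarrow> nat \<Rightarrow> nat" where
  "J m k = card {p. p permutes {1..m} \<and> inversions m p \<le> k}"

end

theory Submission
  imports Defs
begin

text \<open>
  With \<open>n = m + 1\<close>, the binomial factors are positive exactly when \<open>j\<^sub>0 \<le> t + m\<close> and
  \<open>j\<^sub>i \<le> m - i\<close> for \<open>1 \<le> i \<le> m\<close>. Put \<open>c\<^sub>i = m - i - j\<^sub>i\<close>. Since \<open>j\<close> sums to
  \<open>binomial (m + 1) 2 = m + \<Sum>(m - i)\<close>, we get \<open>j\<^sub>0 = m + \<Sum>c\<^sub>i\<close>, so the first bound reads
  \<open>\<Sum>c\<^sub>i \<le> t\<close>, and \<open>j - \<delta> = (\<Sum>c\<^sub>i, -c\<^sub>1, \<dots>, -c\<^sub>m, 0)\<close> is the net flow of the star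
  sending \<open>c\<^sub>i\<close> units from vertex \<open>0\<close> to vertex \<open>i\<close>; so the Kostant factor is
  automatically positive. Thus \<open>S\<^sup>+\<^sub>n(N)\<close> is in bijection with the vectors
  \<open>0 \<le> c\<^sub>i \<le> m - i\<close> of weight at most \<open>t\<close>, and these are exactly the Lehmer codes of the
  permutations of \<open>{1..m}\<close> with at most \<open>t\<close> inversions.
\<close>

lemma sum_diff_atLeastAtMost_eq_choose_two: "(\<Sum>a\<in>{1..m}. m - a) = m choose 2"
proof (induction m)
  case (Suc m)
  have "(\<Sum>a\<in>{1..Suc m}. Suc m - a) = (\<Sum>a\<in>{1..m}. m - a) + m"
    by (simp add: Suc_diff_le sum_Suc)
  also have "\<dots> = m + (m choose 2)"
    using Suc by simp
  also have "\<dots> = Suc m choose 2"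
    by (simp add: numeral_2_eq_2)
  finally show ?case .
qed simp

lemma sum_lessThan_Suc_eq_head_plus: "(\<Sum>i<Suc m. g i) = g 0 + (\<Sum>i\<in>{1..m}. g i)"
proof -
  have "{..<Suc m} = insert 0 {1..m}"
    by auto
  then show ?thesis
    by simp
qed

lemma Suc_choose_two_eq: "Suc m choose 2 = m + (\<Sum>a\<in>{1..m}. m - a)"
  using sum_diff_atLeastAtMost_eq_choose_two[of m] by (simp add: numeral_2_eq_2)

lemma inj_on_card_less:
  fixes S :: "'a :: linorder set"
  assumes "finite S"
  shows "inj_on (\<lambda>x. card {z \<in> S. z < x}) S"
proof (rule linorder_inj_onI')
  fix x y assume "x \<in> S" "y \<in> S" "x < y"
  then have "card {z \<in> S. z < x} < card {z \<in> S. z < y}"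
    using assms by (intro psubset_card_mono) auto
  then show "card {z \<in> S. z < x} \<noteq> card {z \<in> S. z < y}"
    by simp
qed

lemma permutes_image_atLeastAtMost_tail:
  fixes m a :: nat
  assumes "p permutes {1..m}" "1 \<le> a"
  shows "p ` {a..m} = {1..m} - p ` {1..<a}"
proof -
  have "{a..m} = {1..m} - {1..<a}"
    using assms(2) by auto
  then show ?thesis
    using assms(1) by (simp add: image_set_diff permutes_inj permutes_image)
qed

definition lehmer_code :: "nat \<Rightarrow> (nat \<Rightarrow> nat) \<Rightarrow> nat \<Rightarrow> nat" where
  "lehmer_code m p = restrict (\<lambda>a. card {b \<in> {1..m}. a < b \<and> p b < p a}) {1..m}"

definition lehmer_codes :: "nat \<Rightarrow> (nat \<Rightarrow> nat) set" where
  "lehmer_codes m = PiE {1..m} (\<lambda>a. {0..m - a})"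

lemma finite_lehmer_codes: "finite (lehmer_codes m)"
  unfolding lehmer_codes_def by (intro finite_PiE) auto

lemma card_lehmer_codes: "card (lehmer_codes m) = fact m"
proof -
  have "(\<Prod>a\<in>{1..m}. Suc (m - a)) = \<Prod>{1..m}"
    using prod.atLeastAtMost_rev[of "\<lambda>a. a" 1 m] by (simp add: Suc_diff_le)
  then show ?thesis
    unfolding lehmer_codes_def by (simp add: card_PiE fact_prod)
qed

lemma sum_le_of_lehmer_codes:
  assumes "c \<in> lehmer_codes m"
  shows "(\<Sum>a\<in>{1..m}. c a) \<le> m choose 2"
proof -
  have "(\<Sum>a\<in>{1..m}. c a) \<le> (\<Sum>a\<in>{1..m}. m - a)"
    using assms unfolding lehmer_codes_def by (intro sum_mono) auto
  also have "\<dots> = m choose 2"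
    by (rule sum_diff_atLeastAtMost_eq_choose_two)
  finally show ?thesis .
qed

lemma lehmer_code_in_lehmer_codes: "lehmer_code m p \<in> lehmer_codes m"
proof -
  have "card {b \<in> {1..m}. a < b \<and> p b < p a} \<le> card {a<..m}" for a
    by (rule card_mono) auto
  then show ?thesis
    unfolding lehmer_code_def lehmer_codes_def by auto
qed

lemma inversions_eq_sum_lehmer_code:
  "inversions m p = (\<Sum>a\<in>{1..m}. lehmer_code m p a)"
proof -
  have "{(a, b). a \<in> {1..m} \<and> b \<in> {1..m} \<and> a < b \<and> p a > p b}
      = Sigma {1..m} (\<lambda>a. {b \<in> {1..m}. a < b \<and> p b < p a})"
    by auto
  then show ?thesis
    unfolding inversions_def lehmer_code_def by simp
qed

lemma lehmer_code_eq_card_image: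
  assumes "p permutes {1..m}" "a \<in> {1..m}"
  shows "lehmer_code m p a = card {x \<in> p ` {a..m}. x < p a}"
proof -
  have "{x \<in> p ` {a..m}. x < p a} = p ` {b \<in> {1..m}. a < b \<and> p b < p a}"
    using assms(2) by (auto simp: image_iff Bex_def le_less)
  moreover have "inj_on p {b \<in> {1..m}. a < b \<and> p b < p a}"
    using permutes_inj[OF assms(1)] by (auto intro: inj_on_subset)
  ultimately show ?thesis
    using assms(2) unfolding lehmer_code_def by (simp add: card_image)
qed

lemma inj_on_lehmer_code: "inj_on (lehmer_code m) {p. p permutes {1..m}}"
proof (rule inj_onI, rule ccontr)
  fix p q
  assume p: "p \<in> {p. p permutes {1..m}}" and q: "q \<in> {p. p permutes {1..m}}"
    and codes: "lehmer_code m p = lehmer_code m q" and "p \<noteq> q"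
  \<comment> \<open>At the first \<open>a\<close> with \<open>p a \<noteq> q a\<close>, both permutations map \<open>{a..m}\<close> onto the same
    set, and the codes at \<open>a\<close> are the ranks of \<open>p a\<close> and \<open>q a\<close> in it.\<close>
  then obtain a where a: "p a \<noteq> q a" "\<And>b. b < a \<Longrightarrow> p b = q b"
    using exists_least_iff[of "\<lambda>a. p a \<noteq> q a"] by blast
  have "a \<in> {1..m}"
    using a(1) p q permutes_not_in by (metis mem_Collect_eq)
  moreover have "p ` {1..<a} = q ` {1..<a}"
    using a(2) by auto
  ultimately have tails: "p ` {a..m} = q ` {a..m}"
    using p q by (simp add: permutes_image_atLeastAtMost_tail)
  have "card {x \<in> p ` {a..m}. x < p a} = lehmer_code m p a"
    using lehmer_code_eq_card_image p \<open>a \<in> {1..m}\<close> by simp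
  also have "\<dots> = lehmer_code m q a"
    using codes by simp
  also have "\<dots> = card {x \<in> p ` {a..m}. x < q a}"
    using lehmer_code_eq_card_image q \<open>a \<in> {1..m}\<close> tails by simp
  finally have "card {x \<in> p ` {a..m}. x < p a} = card {x \<in> p ` {a..m}. x < q a}" .
  moreover have "p a \<in> p ` {a..m}" "q a \<in> p ` {a..m}"
    using \<open>a \<in> {1..m}\<close> tails by auto
  ultimately show False
    using inj_onD[OF inj_on_card_less] a(1) by blast
qed

lemma bij_betw_lehmer_code: "bij_betw (lehmer_code m) {p. p permutes {1..m}} (lehmer_codes m)"
proof -
  have "lehmer_code m ` {p. p permutes {1..m}} \<subseteq> lehmer_codes m"
    using lehmer_code_in_lehmer_codes by blast
  moreover have "card (lehmer_code m ` {p. p permutes {1..m}}) = card (lehmer_codes m)"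
    using card_image[OF inj_on_lehmer_code] card_permutations[of "{1..m}" m]
    by (simp add: card_lehmer_codes)
  ultimately have "lehmer_code m ` {p. p permutes {1..m}} = lehmer_codes m"
    using card_subset_eq finite_lehmer_codes by blast
  then show ?thesis
    using inj_on_lehmer_code by (simp add: bij_betw_def)
qed

lemma J_eq_card_lehmer_codes: "J m k = card {c \<in> lehmer_codes m. (\<Sum>a\<in>{1..m}. c a) \<le> k}"
proof -
  have "bij_betw (lehmer_code m) {p \<in> {p. p permutes {1..m}}. inversions m p \<le> k}
      {c \<in> lehmer_codes m. (\<Sum>a\<in>{1..m}. c a) \<le> k}"
    by (intro bij_betw_Collect bij_betw_lehmer_code) (simp add: inversions_eq_sum_lehmer_code)
  then show ?thesis
    unfolding J_def by (simp add: bij_betw_same_card)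
qed

text \<open>Weighting vertex \<open>i\<close> by \<open>i\<close> turns the conservation law into the total length of a
  flow; since every edge has length at least 1, this bounds each \<open>f a b\<close>, so \<open>K n M\<close> counts
  a finite set.\<close>

lemma kostant_flows_weighted_length:
  assumes "f \<in> kostant_flows n M"
  shows "(\<Sum>a<n. \<Sum>b\<in>{Suc a..n}. int (b - a) * int (f a b)) = - (\<Sum>i\<le>n. int i * M i)"
proof -
  have M: "M i = (\<Sum>b\<in>{Suc i..n}. int (f i b)) - (\<Sum>a<i. int (f a i))" if "i \<le> n" for i
    using assms that unfolding kostant_flows_def
    by (auto simp: atLeastSucAtMost_greaterThanAtMost[symmetric])
  have "(\<Sum>i\<le>n. int i * M i)
      = (\<Sum>i\<le>n. \<Sum>b\<in>{Suc i..n}. int i * int (f i b)) - (\<Sum>i\<le>n. \<Sum>a<i. int i * int (f a i))"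
    by (simp add: M right_diff_distrib sum_distrib_left sum_subtractf)
  also have "(\<Sum>i\<le>n. \<Sum>b\<in>{Suc i..n}. int i * int (f i b))
      = (\<Sum>a<n. \<Sum>b\<in>{Suc a..n}. int a * int (f a b))"
    by (simp add: lessThan_Suc_atMost[symmetric])
  also have "(\<Sum>i\<le>n. \<Sum>a<i. int i * int (f a i)) = (\<Sum>a<n. \<Sum>b\<in>{Suc a..n}. int b * int (f a b))"
    by (rule sum.nested_swap')
  finally show ?thesis
    by (simp add: sum_subtractf[symmetric] sum_negf[symmetric] of_nat_diff left_diff_distrib)
qed

lemma kostant_flows_le:
  assumes "f \<in> kostant_flows n M"
  shows "f a b \<le> nat (- (\<Sum>i\<le>n. int i * M i))"
proof (cases "a < b \<and> b \<le> n")
  case False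
  then show ?thesis
    using assms unfolding kostant_flows_def by auto
next
  case True
  have "int (f a b) \<le> int (b - a) * int (f a b)"
    using True by (simp add: mult_le_cancel_right1)
  also have "\<dots> \<le> (\<Sum>b\<in>{Suc a..n}. int (b - a) * int (f a b))"
    using True by (intro member_le_sum) auto
  also have "\<dots> \<le> (\<Sum>a<n. \<Sum>b\<in>{Suc a..n}. int (b - a) * int (f a b))"
    using True by (intro member_le_sum sum_nonneg) auto
  finally show ?thesis
    using kostant_flows_weighted_length[OF assms] by simp
qed

lemma finite_kostant_flows: "finite (kostant_flows n M)"
proof -
  define B where "B = nat (- (\<Sum>i\<le>n. int i * M i))"
  define G where "G = {g :: nat \<times> nat \<Rightarrow> nat.
    \<forall>x. (x \<in> {..n} \<times> {..n} \<longrightarrow> g x \<in> {..B}) \<and> (x \<notin> {..n} \<times> {..n} \<longrightarrow> g x = 0)}"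
  have "kostant_flows n M \<subseteq> curry ` G"
  proof
    fix f assume f: "f \<in> kostant_flows n M"
    then have "case_prod f \<in> G"
      unfolding B_def G_def using kostant_flows_le[OF f] by (auto simp: kostant_flows_def)
    then show "f \<in> curry ` G"
      by (intro image_eqI[of _ _ "case_prod f"]) auto
  qed
  moreover have "finite G"
    unfolding G_def by (intro finite_set_of_finite_funs) auto
  ultimately show ?thesis
    using finite_subset by blast
qed

lemma K_pos_of_mem_kostant_flows: "f \<in> kostant_flows n M \<Longrightarrow> 0 < K n M"
  unfolding K_def using finite_kostant_flows by (auto simp: card_gt_0_iff)

lemma star_flow_in_kostant_flows:
  assumes "B \<subseteq> {1..n}"
  shows "(\<lambda>a b. if a = 0 \<and> b \<in> B then c b else 0)
     \<in> kostant_flows n (\<lambda>i. if i = 0 then int (\<Sum>b\<in>B. c b) else if i \<in> B then - int (c i) else 0)"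
  unfolding kostant_flows_def
proof (intro CollectI conjI allI impI)
  fix a b assume "\<not> (a < b \<and> b \<le> n)"
  then show "(if a = 0 \<and> b \<in> B then c b else 0) = 0"
    using assms by (auto dest: subsetD)
next
  fix i assume "i \<le> n"
  show "(\<Sum>b\<in>{i<..n}. int (if i = 0 \<and> b \<in> B then c b else 0))
      - (\<Sum>a<i. int (if a = 0 \<and> i \<in> B then c i else 0))
      = (if i = 0 then int (\<Sum>b\<in>B. c b) else if i \<in> B then - int (c i) else 0)"
  proof (cases "i = 0")
    case True
    have "{b \<in> {0<..n}. b \<in> B} = B"
      using assms by auto
    then have "(\<Sum>b\<in>{0<..n}. if b \<in> B then c b else 0) = (\<Sum>b\<in>B. c b)"
      using sum.inter_filter[of "{0<..n}" c "\<lambda>b. b \<in> B"] by simp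
    then show ?thesis
      using True by (simp only: of_nat_sum[symmetric]) simp
  next
    case False
    have "(\<Sum>a<i. int (if a = 0 \<and> i \<in> B then c i else 0))
        = (\<Sum>a<i. if a = 0 then int (if i \<in> B then c i else 0) else 0)"
      by (intro sum.cong) auto
    also have "\<dots> = int (if i \<in> B then c i else 0)"
      using False by (simp add: sum.delta)
    finally show ?thesis
      using False by simp
  qed
qed

definition composition_of_code :: "nat \<Rightarrow> (nat \<Rightarrow> nat) \<Rightarrow> nat \<Rightarrow> nat" where
  "composition_of_code m c =
     (\<lambda>i. if i = 0 then m + (\<Sum>a\<in>{1..m}. c a) else if i \<le> m then m - i - c i else 0)"

lemma composition_of_code_in_weak_compositions:
  assumes "c \<in> lehmer_codes m"
  shows "composition_of_code m c \<in> weak_compositions (Suc m) (Suc m choose 2)"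
proof -
  have le: "c a \<le> m - a" if "a \<in> {1..m}" for a
    using assms that unfolding lehmer_codes_def by auto
  have "(\<Sum>i<Suc m. composition_of_code m c i)
      = m + (\<Sum>a\<in>{1..m}. c a) + (\<Sum>a\<in>{1..m}. m - a - c a)"
    unfolding sum_lessThan_Suc_eq_head_plus by (simp add: composition_of_code_def)
  also have "(\<Sum>a\<in>{1..m}. m - a - c a) = (\<Sum>a\<in>{1..m}. m - a) - (\<Sum>a\<in>{1..m}. c a)"
    using le by (rule sum_subtractf_nat)
  also have "m + (\<Sum>a\<in>{1..m}. c a) + \<dots> = Suc m choose 2"
    using sum_mono[of "{1..m}" c "\<lambda>a. m - a", OF le] by (simp add: Suc_choose_two_eq)
  finally show ?thesis
    unfolding weak_compositions_def composition_of_code_def by auto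
qed

lemma j_minus_delta_composition_of_code:
  assumes "c \<in> lehmer_codes m"
  shows "j_minus_delta (Suc m) (composition_of_code m c)
       = (\<lambda>i. if i = 0 then int (\<Sum>b\<in>{1..m}. c b) else if i \<in> {1..m} then - int (c i) else 0)"
proof
  fix i
  have "i \<in> {1..m} \<Longrightarrow> c i \<le> m - i"
    using assms unfolding lehmer_codes_def by auto
  then show "j_minus_delta (Suc m) (composition_of_code m c) i
      = (if i = 0 then int (\<Sum>b\<in>{1..m}. c b) else if i \<in> {1..m} then - int (c i) else 0)"
    unfolding j_minus_delta_def composition_of_code_def by (auto simp: of_nat_diff)
qed

lemma K_composition_of_code_pos:
  assumes "c \<in> lehmer_codes m"
  shows "0 < K (Suc m) (j_minus_delta (Suc m) (composition_of_code m c))"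
  unfolding j_minus_delta_composition_of_code[OF assms]
  by (rule K_pos_of_mem_kostant_flows, rule star_flow_in_kostant_flows) auto

lemma prod_gchoose_pos_iff:
  assumes "N = (\<lambda>i. if i = 0 then int t else if i = Suc m then - int t else 0)"
  shows "0 < (\<Prod>i<Suc m. (of_int (N i + int (Suc m - 1 - i)) :: real) gchoose j i)
    \<longleftrightarrow> j 0 \<le> t + m \<and> (\<forall>i\<in>{1..m}. j i \<le> m - i)"
proof -
  define T where "T i = (if i = 0 then t + m else m - i)" for i
  have "(of_int (N i + int (Suc m - 1 - i)) :: real) gchoose j i = real (T i choose j i)"
    if "i < Suc m" for i
    using that unfolding assms T_def by (simp add: binomial_gbinomial)
  then have "(\<Prod>i<Suc m. (of_int (N i + int (Suc m - 1 - i)) :: real) gchoose j i)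
      = real (\<Prod>i<Suc m. T i choose j i)"
    by (simp add: of_nat_prod del: prod.lessThan_Suc)
  also have "0 < \<dots> \<longleftrightarrow> (\<forall>i<Suc m. j i \<le> T i)"
    by (simp only: of_nat_0_less_iff prod_pos_nat_iff[OF finite_lessThan] lessThan_iff
        zero_less_binomial_iff Ball_def)
  also have "\<dots> \<longleftrightarrow> j 0 \<le> t + m \<and> (\<forall>i\<in>{1..m}. j i \<le> m - i)"
    unfolding T_def by (auto simp: less_Suc_eq_le)
  finally show ?thesis .
qed

lemma weak_composition_head_eq:
  assumes "j \<in> weak_compositions (Suc m) (Suc m choose 2)" "\<forall>i\<in>{1..m}. j i \<le> m - i"
  shows "j 0 = m + (\<Sum>a\<in>{1..m}. m - a - j a)"
proof -
  have "(\<Sum>a\<in>{1..m}. m - a - j a) = (\<Sum>a\<in>{1..m}. m - a) - (\<Sum>a\<in>{1..m}. j a)"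
    using assms(2) by (intro sum_subtractf_nat) auto
  moreover have "(\<Sum>a\<in>{1..m}. j a) \<le> (\<Sum>a\<in>{1..m}. m - a)"
    using assms(2) by (intro sum_mono) auto
  moreover have "j 0 + (\<Sum>a\<in>{1..m}. j a) = m + (\<Sum>a\<in>{1..m}. m - a)"
    using assms(1) unfolding weak_compositions_def sum_lessThan_Suc_eq_head_plus
    by (simp add: Suc_choose_two_eq)
  ultimately show ?thesis
    by linarith
qed

lemma inj_on_composition_of_code: "inj_on (composition_of_code m) (lehmer_codes m)"
proof (rule inj_onI)
  fix c d
  assume c: "c \<in> lehmer_codes m" and d: "d \<in> lehmer_codes m"
    and eq: "composition_of_code m c = composition_of_code m d"
  show "c = d"
  proof (rule PiE_ext[OF c[unfolded lehmer_codes_def] d[unfolded lehmer_codes_def]])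
    fix a assume a: "a \<in> {1..m}"
    then have "m - a - c a = m - a - d a"
      using fun_cong[OF eq, of a] by (simp add: composition_of_code_def)
    moreover have "c a \<le> m - a" "d a \<le> m - a"
      using a c d unfolding lehmer_codes_def by auto
    ultimately show "c a = d a"
      by linarith
  qed
qed

lemma Splus_eq_image_composition_of_code:
  assumes N: "N = (\<lambda>i. if i = 0 then int t else if i = Suc m then - int t else 0)"
  shows "Splus (Suc m) N = composition_of_code m ` {c \<in> lehmer_codes m. (\<Sum>a\<in>{1..m}. c a) \<le> t}"
proof (intro equalityI subsetI)
  fix j assume "j \<in> Splus (Suc m) N"
  then have j: "j \<in> weak_compositions (Suc m) (Suc m choose 2)"
    and "0 < (\<Prod>i<Suc m. (of_int (N i + int (Suc m - 1 - i)) :: real) gchoose j i)"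
    unfolding Splus_def by (auto simp: zero_less_mult_iff simp del: prod.lessThan_Suc)
  then have bounds: "j 0 \<le> t + m" "\<forall>i\<in>{1..m}. j i \<le> m - i"
    using prod_gchoose_pos_iff[OF N] by auto
  define c where "c = restrict (\<lambda>a. m - a - j a) {1..m}"
  have head: "j 0 = m + (\<Sum>a\<in>{1..m}. c a)"
    unfolding c_def using weak_composition_head_eq[OF j bounds(2)] by simp
  have "c \<in> lehmer_codes m"
    unfolding c_def lehmer_codes_def by auto
  moreover have "composition_of_code m c = j"
  proof
    fix i
    show "composition_of_code m c i = j i"
      using head bounds(2)[rule_format, of i] j
      unfolding composition_of_code_def c_def weak_compositions_def by (cases "i = 0"; cases "i \<le> m") auto
  qed
  moreover have "(\<Sum>a\<in>{1..m}. c a) \<le> t"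
    using head bounds(1) by simp
  ultimately show "j \<in> composition_of_code m ` {c \<in> lehmer_codes m. (\<Sum>a\<in>{1..m}. c a) \<le> t}"
    by blast
next
  fix j assume "j \<in> composition_of_code m ` {c \<in> lehmer_codes m. (\<Sum>a\<in>{1..m}. c a) \<le> t}"
  then obtain c where c: "c \<in> lehmer_codes m" "(\<Sum>a\<in>{1..m}. c a) \<le> t"
    and j: "j = composition_of_code m c"
    by blast
  have "j 0 \<le> t + m \<and> (\<forall>i\<in>{1..m}. j i \<le> m - i)"
    using c(2) by (auto simp: j composition_of_code_def)
  then show "j \<in> Splus (Suc m) N"
    unfolding Splus_def j
    using composition_of_code_in_weak_compositions[OF c(1)] K_composition_of_code_pos[OF c(1)]
      prod_gchoose_pos_iff[OF N]
    by (simp del: prod.lessThan_Suc)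
qed

theorem proposition6p5:
  fixes n t :: nat and N :: "nat \<Rightarrow> int"
  assumes "n \<ge> 2"
    and "N = (\<lambda>i. if i = 0 then int t else if i = n then - int t else 0)"
  shows "card (Splus n N) = J (n - 1) t
         \<and> (t \<ge> (n - 1) choose 2 \<longrightarrow> card (Splus n N) = fact (n - 1))"
proof -
  obtain m where n: "n = Suc m"
    using assms(1) by (cases n) auto
  have "card (Splus n N) = card {c \<in> lehmer_codes m. (\<Sum>a\<in>{1..m}. c a) \<le> t}"
    using Splus_eq_image_composition_of_code[OF assms(2)[unfolded n]]
      inj_on_subset[OF inj_on_composition_of_code] by (simp add: n card_image)
  moreover have "{c \<in> lehmer_codes m. (\<Sum>a\<in>{1..m}. c a) \<le> t} = lehmer_codes m"
    if "t \<ge> m choose 2"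
    using that sum_le_of_lehmer_codes order.trans by blast
  ultimately show ?thesis
    by (simp add: n J_eq_card_lehmer_codes card_lehmer_codes)
qed

end
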